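(* Let $\mathfrak{n}$ be a real nilpotent Lie algebra with a bi-invariant complex structure $J$. If there exists an inner product on $\mathfrak{n}$ that is Hermitian with respect to $J$ and pluriclosed, then $\mathfrak{n}$ is abelian.
   Context: A complex structure on a real Lie algebra $\mathfrak{g}$ is a linear map $J$ with $J^2=-I$ and $N_J(x,y)=[x,y]+J([Jx,y]+[x,Jy])-[Jx,Jy]=0$ for all $x,y$; it is bi-invariant if $J[x,y]=[x,Jy]$ for all $x,y$. An inner product $\langle\cdot,\cdot\rangle$ is Hermitian if $\langle Jx,Jy\rangle=\langle x,y\rangle$. Its torsion 3-form is $c(x,y,z)=-\langle[Jx,Jy],z\rangle-\langle[Jy,Jz],x\rangle-\langle[Jz,Jx],y\rangle$, and $\langle\cdot,\cdot\rangle$ is pluriclosed if $dc=0$, where $d$ is the Chevalley–Eilenberg differential on $\Lambda^*\mathfrak{g}^*$. *)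

theory Defs
  imports "HOL-Analysis.Analysis"
begin

text \<open>A finite-dimensional real Lie algebra is modelled as a finite-dimensional real
vector space (a type of class euclidean_space; its built-in inner product is NOT used)
together with a bracket br.\<close>

definition lie_algebra :: "('a::euclidean_space \<Rightarrow> 'a \<Rightarrow> 'a) \<Rightarrow> bool" where
  "lie_algebra br \<longleftrightarrow> bilinear br \<and> (\<forall>x. br x x = 0) \<and>
     (\<forall>x y z. br x (br y z) + br y (br z x) + br z (br x y) = 0)"

fun lower_central :: "('a::euclidean_space \<Rightarrow> 'a \<Rightarrow> 'a) \<Rightarrow> nat \<Rightarrow> 'a set" where
  "lower_central br 0 = UNIV"
| "lower_central br (Suc k) = span {br x y | x y. y \<in> lower_central br k}"

definition nilpotent_lie :: "('a::euclidean_space \<Rightarrow> 'a \<Rightarrow> 'a) \<Rightarrow> bool" where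
  "nilpotent_lie br \<longleftrightarrow> (\<exists>k. lower_central br k = {0})"

definition abelian_lie :: "('a::euclidean_space \<Rightarrow> 'a \<Rightarrow> 'a) \<Rightarrow> bool" where
  "abelian_lie br \<longleftrightarrow> (\<forall>x y. br x y = 0)"

definition complex_structure ::
  "('a::euclidean_space \<Rightarrow> 'a \<Rightarrow> 'a) \<Rightarrow> ('a \<Rightarrow> 'a) \<Rightarrow> bool" where
  "complex_structure br J \<longleftrightarrow> linear J \<and> (\<forall>x. J (J x) = - x) \<and>
     (\<forall>x y. br x y + J (br (J x) y + br x (J y)) - br (J x) (J y) = 0)"

definition bi_invariant ::
  "('a::euclidean_space \<Rightarrow> 'a \<Rightarrow> 'a) \<Rightarrow> ('a \<Rightarrow> 'a) \<Rightarrow> bool" where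
  "bi_invariant br J \<longleftrightarrow> (\<forall>x y. J (br x y) = br x (J y))"

definition inner_product :: "('a::euclidean_space \<Rightarrow> 'a \<Rightarrow> real) \<Rightarrow> bool" where
  "inner_product g \<longleftrightarrow> bilinear g \<and> (\<forall>x y. g x y = g y x) \<and> (\<forall>x. x \<noteq> 0 \<longrightarrow> g x x > 0)"

definition hermitian :: "('a::euclidean_space \<Rightarrow> 'a \<Rightarrow> real) \<Rightarrow> ('a \<Rightarrow> 'a) \<Rightarrow> bool" where
  "hermitian g J \<longleftrightarrow> (\<forall>x y. g (J x) (J y) = g x y)"

definition torsion3 ::
  "('a::euclidean_space \<Rightarrow> 'a \<Rightarrow> 'a) \<Rightarrow> ('a \<Rightarrow> 'a) \<Rightarrow> ('a \<Rightarrow> 'a \<Rightarrow> real) \<Rightarrow> 'a \<Rightarrow> 'a \<Rightarrow> 'a \<Rightarrow> real" where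
  "torsion3 br J g x y z = - g (br (J x) (J y)) z - g (br (J y) (J z)) x - g (br (J z) (J x)) y"

text \<open>Chevalley--Eilenberg differential of a 3-form (trivial coefficients):
  (d c)(x0,x1,x2,x3) = sum over i<j of (-1)^(i+j) c([xi,xj], ..., omitting xi, xj, ...).\<close>
definition ce_d3 ::
  "('a::euclidean_space \<Rightarrow> 'a \<Rightarrow> 'a) \<Rightarrow> ('a \<Rightarrow> 'a \<Rightarrow> 'a \<Rightarrow> real) \<Rightarrow> 'a \<Rightarrow> 'a \<Rightarrow> 'a \<Rightarrow> 'a \<Rightarrow> real" where
  "ce_d3 br c x0 x1 x2 x3 =
     - c (br x0 x1) x2 x3 + c (br x0 x2) x1 x3 - c (br x0 x3) x1 x2
     - c (br x1 x2) x0 x3 + c (br x1 x3) x0 x2 - c (br x2 x3) x0 x1"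

definition pluriclosed ::
  "('a::euclidean_space \<Rightarrow> 'a \<Rightarrow> 'a) \<Rightarrow> ('a \<Rightarrow> 'a) \<Rightarrow> ('a \<Rightarrow> 'a \<Rightarrow> real) \<Rightarrow> bool" where
  "pluriclosed br J g \<longleftrightarrow> (\<forall>x0 x1 x2 x3. ce_d3 br (torsion3 br J g) x0 x1 x2 x3 = 0)"

end

theory Submission
  imports Defs
begin

text \<open>Bi-invariance makes J commute with the bracket in both slots, so [Jx, Jy] = -[x, y] and
the torsion form becomes the cyclic sum of g([x, y], z). If C(m+2) = 0 in the lower central
series, then C(m+1) is central and J-stable, and for w = [x, y] with y in C(m), evaluating dc on
(x, y, Jx, Jy) leaves only the terms whose bracket lands in C(m+1); they add up to
2(g(w, w) + g(Jw, Jw)). Pluriclosedness and positivity force w = 0, so C(m+1) = 0. Descending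
from the nilpotency index gives [n, n] = C(1) = 0.\<close>

lemma lie_algebra_antisym:
  assumes "lie_algebra br"
  shows "br y x = - br x y"
proof -
  have bl: "bilinear br" and alt: "\<And>a. br a a = 0"
    using assms unfolding lie_algebra_def by auto
  have "br (x + y) (x + y) = br x x + br y x + (br x y + br y y)"
    by (simp only: bilinear_ladd[OF bl] bilinear_radd[OF bl])
  then have "br x y + br y x = 0" by (simp add: alt add.commute)
  then show ?thesis by (simp add: add_eq_0_iff)
qed

lemma bi_invariant_left:
  assumes "lie_algebra br" "linear J" "bi_invariant br J"
  shows "br (J x) y = J (br x y)"
proof -
  have "br (J x) y = - J (br y x)"
    using assms(3) lie_algebra_antisym[OF assms(1)] unfolding bi_invariant_def by metis
  also have "\<dots> = J (br x y)"
    using lie_algebra_antisym[OF assms(1), of x y] by (simp add: linear_neg[OF assms(2)])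
  finally show ?thesis .
qed

lemma bi_invariant_bracket_J_J:
  assumes "lie_algebra br" "linear J" "\<And>a. J (J a) = - a" "bi_invariant br J"
  shows "br (J x) (J y) = - br x y"
proof -
  have "br (J x) (J y) = J (br x (J y))" by (rule bi_invariant_left[OF assms(1,2,4)])
  also have "\<dots> = J (J (br x y))" using assms(4) unfolding bi_invariant_def by simp
  finally show ?thesis using assms(3) by simp
qed

lemma torsion3_bi_invariant:
  assumes "lie_algebra br" "linear J" "\<And>a. J (J a) = - a" "bi_invariant br J" "bilinear g"
  shows "torsion3 br J g x y z = g (br x y) z + g (br y z) x + g (br z x) y"
  unfolding torsion3_def bi_invariant_bracket_J_J[OF assms(1-4)]
  by (simp add: bilinear_lneg[OF assms(5)])

lemma torsion3_central:
  assumes "lie_algebra br" "linear J" "\<And>a. J (J a) = - a" "bi_invariant br J" "bilinear g"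
    and "\<And>a. br a v = 0"
  shows "torsion3 br J g v b c = g (br b c) v"
  using assms(6) lie_algebra_antisym[OF assms(1), of v]
  by (simp add: torsion3_bi_invariant[OF assms(1-5)] bilinear_lzero[OF assms(5)])

lemma bracket_mem_lower_central_Suc:
  "y \<in> lower_central br k \<Longrightarrow> br x y \<in> lower_central br (Suc k)"
  by (auto intro: span_base)

lemma lower_central_Suc_eq_0_iff:
  "lower_central br (Suc k) = {0} \<longleftrightarrow> (\<forall>x y. y \<in> lower_central br k \<longrightarrow> br x y = 0)"
proof
  assume "lower_central br (Suc k) = {0}"
  then show "\<forall>x y. y \<in> lower_central br k \<longrightarrow> br x y = 0"
    using bracket_mem_lower_central_Suc by blast
next
  assume "\<forall>x y. y \<in> lower_central br k \<longrightarrow> br x y = 0"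
  then have "{br x y | x y. y \<in> lower_central br k} \<subseteq> {0}" by auto
  then have "lower_central br (Suc k) \<subseteq> span {0}" by (simp only: lower_central.simps span_mono)
  then show "lower_central br (Suc k) = {0}" by (auto simp: span_zero)
qed

lemma lower_central_Suc_eq_0:
  assumes "lie_algebra br" "lower_central br k = {0}"
  shows "lower_central br (Suc k) = {0}"
  using assms unfolding lie_algebra_def by (simp add: lower_central_Suc_eq_0_iff bilinear_rzero)

lemma J_mem_lower_central:
  assumes "linear J" "bi_invariant br J" "v \<in> lower_central br k"
  shows "J v \<in> lower_central br k"
  using assms(3)
proof (induction k arbitrary: v)
  case 0
  then show ?case by simp
next
  case (Suc k)
  let ?S = "{br x y | x y. y \<in> lower_central br k}"
  have "J ` span ?S = span (J ` ?S)"
    by (rule linear_span_image[OF assms(1), symmetric])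
  also have "\<dots> \<subseteq> span ?S"
    using Suc.IH assms(2) unfolding bi_invariant_def by (intro span_mono) blast
  finally show ?case using Suc.prems by auto
qed

lemma ce_d3_torsion3_central_bracket:
  assumes "lie_algebra br" "linear J" "\<And>a. J (J a) = - a" "bi_invariant br J" "bilinear g"
    and w: "w = br x y"
    and central: "\<And>a. br a w = 0" "\<And>a. br a (J w) = 0"
  shows "ce_d3 br (torsion3 br J g) x y (J x) (J y) = 2 * (g w w + g (J w) (J w))"
proof -
  note antisym = lie_algebra_antisym[OF assms(1)]
  note T_central = torsion3_central[OF assms(1-5)]
  have Jr: "\<And>a b. br a (J b) = J (br a b)"
    using assms(4) unfolding bi_invariant_def by simp
  have J_neg: "\<And>a. J (- a) = - J a" and J_0: "J 0 = 0"
    using assms(2) by (auto simp: linear_neg linear_0)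
  have brackets: "br x (J x) = 0" "br y (J y) = 0" "br x (J y) = J w" "br y (J x) = - J w"
    "br (J x) (J y) = - w"
    using Jr antisym[of y x] J_neg J_0 bi_invariant_bracket_J_J[OF assms(1-4)]
    by (simp_all add: w lie_algebra_def[THEN iffD1, OF assms(1)])
  have central_neg: "\<And>a. br a (- w) = 0" "\<And>a. br a (- J w) = 0" "\<And>a. br a 0 = 0"
    using central assms(1) unfolding lie_algebra_def by (simp_all add: bilinear_rneg bilinear_rzero)
  have "ce_d3 br (torsion3 br J g) x y (J x) (J y) =
      - torsion3 br J g w (J x) (J y) + torsion3 br J g 0 y (J y)
      - torsion3 br J g (J w) y (J x) - torsion3 br J g (- J w) x (J y)
      + torsion3 br J g 0 x (J x) - torsion3 br J g (- w) x y"
    unfolding ce_d3_def brackets w[symmetric] by simp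
  also have "\<dots> = - g (br (J x) (J y)) w + g (br y (J y)) 0
      - g (br y (J x)) (J w) - g (br x (J y)) (- J w)
      + g (br x (J x)) 0 - g (br x y) (- w)"
    unfolding T_central[OF central(1)] T_central[OF central(2)] T_central[OF central_neg(1)]
      T_central[OF central_neg(2)] T_central[OF central_neg(3)] ..
  also have "\<dots> = 2 * (g w w + g (J w) (J w))"
    unfolding brackets w[symmetric]
    by (simp add: bilinear_lneg[OF assms(5)] bilinear_rneg[OF assms(5)] bilinear_rzero[OF assms(5)])
  finally show ?thesis .
qed

lemma lower_central_descend:
  assumes "lie_algebra br" "complex_structure br J" "bi_invariant br J"
    and g: "inner_product g" "pluriclosed br J g"
    and zero: "lower_central br (Suc (Suc m)) = {0}"
  shows "lower_central br (Suc m) = {0}"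
  unfolding lower_central_Suc_eq_0_iff
proof (intro allI impI)
  fix x y assume y: "y \<in> lower_central br m"
  define w where "w = br x y"
  have linJ: "linear J" and JJ: "\<And>a. J (J a) = - a"
    using assms(2) unfolding complex_structure_def by auto
  have bl: "bilinear g" and pos: "\<And>a. a \<noteq> 0 \<Longrightarrow> g a a > 0"
    using g(1) unfolding inner_product_def by auto
  have w_mem: "w \<in> lower_central br (Suc m)"
    unfolding w_def using y by (rule bracket_mem_lower_central_Suc)
  have central: "br a v = 0" if "v \<in> lower_central br (Suc m)" for a v
    using zero that bracket_mem_lower_central_Suc by blast
  have "ce_d3 br (torsion3 br J g) x y (J x) (J y) = 0"
    using g(2) unfolding pluriclosed_def by blast
  moreover have "ce_d3 br (torsion3 br J g) x y (J x) (J y) = 2 * (g w w + g (J w) (J w))"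
    by (rule ce_d3_torsion3_central_bracket[OF assms(1) linJ JJ assms(3) bl w_def
          central[OF w_mem] central[OF J_mem_lower_central[OF linJ assms(3) w_mem]]])
  moreover have "g a a \<ge> 0" for a
    using pos[of a] by (cases "a = 0") (auto simp: bilinear_lzero[OF bl])
  ultimately have "g w w = 0"
    by (smt (verit))
  then show "br x y = 0"
    using pos unfolding w_def by force
qed

theorem mainTheorem15:
  fixes br :: "'a::euclidean_space \<Rightarrow> 'a \<Rightarrow> 'a" and J :: "'a \<Rightarrow> 'a"
  assumes "lie_algebra br" and "nilpotent_lie br"
    and "complex_structure br J" and "bi_invariant br J"
    and "\<exists>g. inner_product g \<and> hermitian g J \<and> pluriclosed br J g"
  shows "abelian_lie br"
proof -
  obtain g where g: "inner_product g" "pluriclosed br J g"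
    using assms(5) by blast
  obtain k where "lower_central br k = {0}"
    using assms(2) unfolding nilpotent_lie_def by blast
  then have "lower_central br (Suc k) = {0}"
    by (rule lower_central_Suc_eq_0[OF assms(1)])
  then have "lower_central br (Suc 0) = {0}"
  proof (induction k)
    case (Suc k)
    then show ?case
      using lower_central_descend[OF assms(1,3,4) g] by simp
  qed
  then show ?thesis
    unfolding abelian_lie_def lower_central_Suc_eq_0_iff by simp
qed

end
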